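(* A strongly regular graph with parameters $(76,30,8,14)$ does not contain $K_5-e$ as an induced subgraph, where $K_5-e$ is the graph on $5$ vertices obtained from $K_5$ by deleting one edge.
   Context: A graph is strongly regular with parameters $(v,k,\lambda,\mu)$ if it has $v$ vertices, is $k$-regular, adjacent vertices have exactly $\lambda$ common neighbours and distinct non-adjacent vertices have exactly $\mu$ common neighbours. *)

theory Defs
  imports Main
begin

definition simple_graph :: "'a set \<Rightarrow> ('a \<Rightarrow> 'a \<Rightarrow> bool) \<Rightarrow> bool" where
  "simple_graph V E \<longleftrightarrow> finite V \<and> (\<forall>x y. E x y \<longrightarrow> x \<in> V \<and> y \<in> V) \<and>
     (\<forall>x y. E x y \<longrightarrow> E y x) \<and> (\<forall>x. \<not> E x x)"

definition common_nbrs :: "'a set \<Rightarrow> ('a \<Rightarrow> 'a \<Rightarrow> bool) \<Rightarrow> 'a \<Rightarrow> 'a \<Rightarrow> nat" where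
  "common_nbrs V E x y = card {z \<in> V. E x z \<and> E y z}"

definition strongly_regular ::
  "'a set \<Rightarrow> ('a \<Rightarrow> 'a \<Rightarrow> bool) \<Rightarrow> nat \<Rightarrow> nat \<Rightarrow> nat \<Rightarrow> nat \<Rightarrow> bool" where
  "strongly_regular V E v k lam mu \<longleftrightarrow> simple_graph V E \<and> card V = v \<and>
     (\<forall>x\<in>V. card {y \<in> V. E x y} = k) \<and>
     (\<forall>x\<in>V. \<forall>y\<in>V. E x y \<longrightarrow> common_nbrs V E x y = lam) \<and>
     (\<forall>x\<in>V. \<forall>y\<in>V. x \<noteq> y \<and> \<not> E x y \<longrightarrow> common_nbrs V E x y = mu)"

definition has_induced_subgraph ::
  "'a set \<Rightarrow> ('a \<Rightarrow> 'a \<Rightarrow> bool) \<Rightarrow> nat \<Rightarrow> (nat \<Rightarrow> nat \<Rightarrow> bool) \<Rightarrow> bool" where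
  "has_induced_subgraph V E n EH \<longleftrightarrow>
     (\<exists>f. inj_on f {0..<n} \<and> f ` {0..<n} \<subseteq> V \<and>
          (\<forall>i\<in>{0..<n}. \<forall>j\<in>{0..<n}. E (f i) (f j) \<longleftrightarrow> EH i j))"

definition K5_minus_e :: "nat \<Rightarrow> nat \<Rightarrow> bool" where
  "K5_minus_e i j \<longleftrightarrow> i \<noteq> j \<and> {i, j} \<noteq> {0, 1}"

end

theory Submission
  imports Defs
begin

text \<open>
  Let a, b, c, d, e induce K5 - e with a, b the non-adjacent pair, so that
  Q = {b, c, d, e} is a 4-clique.  For every vertex x outside the five, let m(x)
  be the number of neighbours of x in Q.  Since (m - 1)(m - 2) >= 0 we have
  C(m, 2) - m + 1 >= 0.  Summing over the v - 5 outside vertices and counting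
  neighbours and common neighbours of the vertices of Q outside the five with
  the parameters k and lambda of a strongly regular graph gives
  6 lambda - 4 k + v - 5 >= 0.
  The file first turns the regularity conditions into indicator sums, then
  extracts the five vertices from an induced copy of K5 - e, proves the general
  inequality 4 k + 5 <= v + 6 lambda, and finally observes that the parameters
  (76, 30, 8, 14) violate it (4 * 30 + 5 = 125 > 124 = 76 + 6 * 8).
\<close>

lemma srg_degree_sum:
  assumes "strongly_regular V E v k lam mu" and "x \<in> V"
  shows "(\<Sum>y\<in>V. of_bool (E x y) :: int) = int k"
proof -
  have "V \<inter> {y. E x y} = {y \<in> V. E x y}" by blast
  with assms show ?thesis
    unfolding strongly_regular_def simple_graph_def by simp
qed

lemma srg_common_sum:
  assumes "strongly_regular V E v k lam mu" and "x \<in> V" "y \<in> V" "E x y"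
  shows "(\<Sum>z\<in>V. of_bool (E x z \<and> E y z) :: int) = int lam"
proof -
  have "V \<inter> {z. E x z \<and> E y z} = {z \<in> V. E x z \<and> E y z}" by blast
  with assms show ?thesis
    unfolding strongly_regular_def simple_graph_def common_nbrs_def by simp
qed

lemma induced_K5_minus_e_vertices:
  assumes "simple_graph V E" and "has_induced_subgraph V E 5 K5_minus_e"
  obtains a b c d e where "{a, b, c, d, e} \<subseteq> V" "distinct [a, b, c, d, e]"
    "\<not> E a b" "E a c" "E a d" "E a e" "E b c" "E b d" "E b e" "E c d" "E c e" "E d e"
proof -
  obtain f where inj: "inj_on f {0..<5}" and fV: "f ` {0..<5} \<subseteq> V"
    and fE: "\<And>i j. i < 5 \<Longrightarrow> j < 5 \<Longrightarrow> E (f i) (f j) \<longleftrightarrow> K5_minus_e i j"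
    using assms(2) unfolding has_induced_subgraph_def by auto
  have adj: "\<not> E (f 0) (f 1)" "E (f 0) (f 2)" "E (f 0) (f 3)" "E (f 0) (f 4)"
    "E (f 1) (f 2)" "E (f 1) (f 3)" "E (f 1) (f 4)" "E (f 2) (f 3)" "E (f 2) (f 4)"
    "E (f 3) (f 4)"
    by (simp_all add: fE K5_minus_e_def doubleton_eq_iff)
  have "f 0 \<noteq> f 1" using inj_onD[OF inj, of 0 1] by auto
  moreover have "\<not> E x x" for x using assms(1) unfolding simple_graph_def by blast
  ultimately have "distinct [f 0, f 1, f 2, f 3, f 4]" using adj by auto
  moreover have "{f 0, f 1, f 2, f 3, f 4} \<subseteq> V" using fV by auto
  ultimately show ?thesis using adj that by blast
qed

text \<open>The pointwise inequality: if x has m neighbours among four vertices, then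
  C(m, 2) - m + 1 = (m - 1)(m - 2)/2 >= 0.\<close>

lemma four_indicator_bound:
  fixes p q r s :: bool
  shows "(0::int) \<le> of_bool (p \<and> q) + of_bool (p \<and> r) + of_bool (p \<and> s)
     + of_bool (q \<and> r) + of_bool (q \<and> s) + of_bool (r \<and> s)
     - (of_bool p + of_bool q + of_bool r + of_bool s) + 1"
  by (cases p; cases q; cases r; cases s; simp)

lemma sum_outside_five:
  fixes g :: "'a \<Rightarrow> 'b :: ab_group_add"
  assumes "finite V" "{a, b, c, d, e} \<subseteq> V" "distinct [a, b, c, d, e]"
  shows "sum g (V - {a, b, c, d, e}) = sum g V - (g a + g b + g c + g d + g e)"
  using sum.subset_diff[OF assms(2,1), of g] assms(3) by (simp add: add.assoc)

theorem srg_induced_K5_minus_e_bound: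
  assumes srg: "strongly_regular V E v k lam mu"
    and K: "has_induced_subgraph V E 5 K5_minus_e"
  shows "4 * k + 5 \<le> v + 6 * lam"
proof -
  have G: "simple_graph V E" and cardV: "card V = v"
    using srg unfolding strongly_regular_def by auto
  then have fin: "finite V" and sym: "\<And>x y. E x y \<Longrightarrow> E y x" and irr: "\<And>x. \<not> E x x"
    unfolding simple_graph_def by blast+
  obtain a b c d e where S: "{a, b, c, d, e} \<subseteq> V" and dist: "distinct [a, b, c, d, e]"
    and adj: "\<not> E a b" "E a c" "E a d" "E a e" "E b c" "E b d" "E b e" "E c d" "E c e" "E d e"
    using induced_K5_minus_e_vertices[OF G K] by blast
  have "\<not> E b a" using adj(1) sym by blast
  note pattern = adj this adj(2-10)[THEN sym] irr[of a] irr[of b] irr[of c] irr[of d] irr[of e]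
  have inV: "a \<in> V" "b \<in> V" "c \<in> V" "d \<in> V" "e \<in> V" using S by auto
  define Out where "Out = V - {a, b, c, d, e}"
  note Out_sum = sum_outside_five[OF fin S dist, folded Out_def]
  have card_Out: "card Out = v - 5"
    using S fin dist cardV unfolding Out_def by (simp add: card_Diff_subset)
  have five_le: "5 \<le> v"
    using card_mono[OF fin S] dist cardV by simp
  note deg = srg_degree_sum[OF srg] and com = srg_common_sum[OF srg]
  have degs: "(\<Sum>x\<in>Out. of_bool (E b x)) = int k - 3"
    "(\<Sum>x\<in>Out. of_bool (E c x)) = int k - 4"
    "(\<Sum>x\<in>Out. of_bool (E d x)) = int k - 4"
    "(\<Sum>x\<in>Out. of_bool (E e x)) = int k - 4"
    by (simp_all add: Out_sum deg inV pattern)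
  have coms: "(\<Sum>x\<in>Out. of_bool (E b x \<and> E c x)) = int lam - 2"
    "(\<Sum>x\<in>Out. of_bool (E b x \<and> E d x)) = int lam - 2"
    "(\<Sum>x\<in>Out. of_bool (E b x \<and> E e x)) = int lam - 2"
    "(\<Sum>x\<in>Out. of_bool (E c x \<and> E d x)) = int lam - 3"
    "(\<Sum>x\<in>Out. of_bool (E c x \<and> E e x)) = int lam - 3"
    "(\<Sum>x\<in>Out. of_bool (E d x \<and> E e x)) = int lam - 3"
    by (simp_all add: Out_sum com inV pattern)
  define T where "T x = (of_bool (E b x \<and> E c x) + of_bool (E b x \<and> E d x)
     + of_bool (E b x \<and> E e x) + of_bool (E c x \<and> E d x) + of_bool (E c x \<and> E e x)
     + of_bool (E d x \<and> E e x)
     - (of_bool (E b x) + of_bool (E c x) + of_bool (E d x) + of_bool (E e x)) + 1 :: int)" for x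
  have "(\<Sum>x\<in>Out. T x) = 6 * int lam - 4 * int k + int v - 5"
    unfolding T_def using degs coms card_Out five_le
    by (simp add: sum.distrib sum_subtractf of_nat_diff)
  moreover have "0 \<le> (\<Sum>x\<in>Out. T x)"
    by (rule sum_nonneg) (simp add: T_def four_indicator_bound del: of_bool_eq)
  ultimately show ?thesis by linarith
qed

theorem mainTheorem9:
  fixes V :: "'a set" and E :: "'a \<Rightarrow> 'a \<Rightarrow> bool"
  assumes "strongly_regular V E 76 30 8 14"
  shows "\<not> has_induced_subgraph V E 5 K5_minus_e"
proof
  assume "has_induced_subgraph V E 5 K5_minus_e"
  from srg_induced_K5_minus_e_bound[OF assms this] show False by simp
qed

end
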